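(* Let $k,n$ be integers with $1\leq k\leq n$ and let $G$ be a bipartite graph of order $n$. If $e(G)\leq e(K_{k-1,n-k+1})$, then $\rho(G)\leq \rho(K_{k-1,n-k+1})$.
   Context: Graphs are finite and simple; $e(G)$ is the number of edges and $\rho(G)$ the largest eigenvalue of the adjacency matrix of $G$. $K_{a,b}$ is the complete bipartite graph with parts of sizes $a$ and $b$. *)

theory Defs
  imports "Jordan_Normal_Form.Char_Poly"
begin

definition simple_graph :: "nat \<Rightarrow> (nat \<Rightarrow> nat \<Rightarrow> bool) \<Rightarrow> bool" where
  "simple_graph n E \<longleftrightarrow>
     (\<forall>i j. E i j \<longrightarrow> i < n \<and> j < n) \<and>
     (\<forall>i j. E i j \<longrightarrow> E j i) \<and> (\<forall>i. \<not> E i i)"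

definition bipartite :: "nat \<Rightarrow> (nat \<Rightarrow> nat \<Rightarrow> bool) \<Rightarrow> bool" where
  "bipartite n E \<longleftrightarrow> (\<exists>S. S \<subseteq> {0..<n} \<and>
     (\<forall>i j. E i j \<longrightarrow> (i \<in> S \<longleftrightarrow> j \<notin> S)))"

definition num_edges :: "nat \<Rightarrow> (nat \<Rightarrow> nat \<Rightarrow> bool) \<Rightarrow> nat" where
  "num_edges n E = card {(i, j). i < j \<and> j < n \<and> E i j}"

definition adj_matrix :: "nat \<Rightarrow> (nat \<Rightarrow> nat \<Rightarrow> bool) \<Rightarrow> real mat" where
  "adj_matrix n E = mat n n (\<lambda>(i, j). if E i j then 1 else 0)"

text \<open>Largest eigenvalue of the adjacency matrix (real symmetric, so all
  eigenvalues are real).\<close>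
definition spec_rad :: "nat \<Rightarrow> (nat \<Rightarrow> nat \<Rightarrow> bool) \<Rightarrow> real" where
  "spec_rad n E = Max {x. eigenvalue (adj_matrix n E) x}"

definition complete_bipartite :: "nat \<Rightarrow> nat \<Rightarrow> nat \<Rightarrow> nat \<Rightarrow> bool" where
  "complete_bipartite a b i j \<longleftrightarrow> i < a + b \<and> j < a + b \<and> ((i < a) \<noteq> (j < a))"

end

theory Submission
  imports Defs "Jordan_Normal_Form.Spectral_Radius" "HOL-Analysis.Convex"
begin

(* Let G be bipartite with sides S and T and m edges, and let w be an eigenvector of its
   adjacency matrix for the eigenvalue x. For i in S, the eigen-equation and Cauchy-Schwarz give
   x^2 w(i)^2 = (sum of w(j) over the neighbours j of i)^2 <= deg(i) * sum_{j in T} w(j)^2;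
   summing over S gives x^2 * sum_S w^2 <= m * sum_T w^2. Adding the symmetric inequality yields
   x^2 <= m, so rho(G) <= sqrt(e(G)). For K_{a,b} this bound is attained: sqrt(ab) is an
   eigenvalue, with eigenvector sqrt b on the first side and sqrt a on the second. Hence
   e(G) <= ab implies rho(G) <= sqrt(ab) = rho(K_{a,b}). *)

lemma eigenvalue_of_real_symmetric_mat_is_real:
  fixes A :: "real mat"
  assumes A: "A \<in> carrier_mat n n"
    and sym: "\<And>i j. i < n \<Longrightarrow> j < n \<Longrightarrow> A $$ (i, j) = A $$ (j, i)"
    and ev: "eigenvalue (of_real_hom.mat_hom A :: complex mat) l"
  shows "cnj l = l"
proof -
  define C :: "complex mat" where "C = of_real_hom.mat_hom A"
  have C: "C \<in> carrier_mat n n" using A unfolding C_def by simp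
  obtain v where v: "v \<in> carrier_vec n" "v \<noteq> 0\<^sub>v n" "C *\<^sub>v v = l \<cdot>\<^sub>v v"
    using ev C unfolding C_def[symmetric] eigenvalue_def eigenvector_def by auto
  have row: "(\<Sum>j<n. of_real (A $$ (i, j)) * v $ j) = l * v $ i" if "i < n" for i
  proof -
    have "(C *\<^sub>v v) $ i = (\<Sum>j<n. of_real (A $$ (i, j)) * v $ j)"
      using that v(1) A unfolding C_def
      by (auto simp: scalar_prod_def lessThan_atLeast0 intro!: sum.cong)
    then show ?thesis using v(3) that v(1) by simp
  qed
  define Q where "Q = (\<Sum>i<n. \<Sum>j<n. of_real (A $$ (i, j)) * cnj (v $ i) * v $ j)"
  define N where "N = (\<Sum>i<n. (cmod (v $ i))\<^sup>2)"
  have "Q = (\<Sum>i<n. cnj (v $ i) * (\<Sum>j<n. of_real (A $$ (i, j)) * v $ j))"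
    unfolding Q_def by (simp add: sum_distrib_left mult_ac)
  also have "\<dots> = (\<Sum>i<n. cnj (v $ i) * (l * v $ i))"
    by (intro sum.cong) (auto simp: row)
  also have "\<dots> = l * (\<Sum>i<n. cnj (v $ i) * v $ i)"
    by (simp add: sum_distrib_left mult_ac)
  finally have Q_eq: "Q = l * of_real N"
    unfolding N_def of_real_sum complex_norm_square by (simp add: mult.commute)
  \<comment> \<open>the Hermitian form of the real symmetric matrix A is real\<close>
  have "cnj Q = (\<Sum>i<n. \<Sum>j<n. of_real (A $$ (i, j)) * v $ i * cnj (v $ j))"
    unfolding Q_def by (simp add: cnj_sum)
  also have "\<dots> = (\<Sum>j<n. \<Sum>i<n. of_real (A $$ (i, j)) * v $ i * cnj (v $ j))"
    by (rule sum.swap)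
  also have "\<dots> = Q"
    unfolding Q_def by (rule sum.cong[OF refl], rule sum.cong[OF refl]) (auto simp: sym mult_ac)
  finally have "cnj Q = Q" .
  moreover obtain i where "i < n" "v $ i \<noteq> 0"
    using v(1,2) by (metis eq_vecI carrier_vecD index_zero_vec)
  then have "N > 0"
    unfolding N_def by (intro sum_pos2[of _ i]) auto
  ultimately show ?thesis using Q_eq by simp
qed

lemma real_symmetric_mat_has_eigenvalue:
  fixes A :: "real mat"
  assumes A: "A \<in> carrier_mat n n" and "n > 0"
    and sym: "\<And>i j. i < n \<Longrightarrow> j < n \<Longrightarrow> A $$ (i, j) = A $$ (j, i)"
  shows "\<exists>x. eigenvalue A x"
proof -
  define C :: "complex mat" where "C = of_real_hom.mat_hom A"
  have C: "C \<in> carrier_mat n n" using A unfolding C_def by simp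
  obtain l where ev: "eigenvalue C l"
    using spectrum_non_empty[OF C \<open>n > 0\<close>] unfolding spectrum_def by auto
  have l: "l = of_real (Re l)"
    using eigenvalue_of_real_symmetric_mat_is_real[OF A sym ev[unfolded C_def]]
    by (metis Reals_cnj_iff of_real_Re)
  have "poly (char_poly C) l = 0" using eigenvalue_root_char_poly[OF C] ev by simp
  then have "poly (map_poly of_real (char_poly A)) (of_real (Re l) :: complex) = 0"
    using l of_real_hom.char_poly_hom[OF A] unfolding C_def by metis
  then have "poly (char_poly A) (Re l) = 0" by (simp add: of_real_hom.poly_map_poly)
  then show ?thesis using eigenvalue_root_char_poly[OF A] by auto
qed

definition neighbours :: "nat \<Rightarrow> (nat \<Rightarrow> nat \<Rightarrow> bool) \<Rightarrow> nat \<Rightarrow> nat set" where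
  "neighbours n E i = {j. j < n \<and> E i j}"

lemma finite_neighbours [simp]: "finite (neighbours n E i)"
  unfolding neighbours_def by simp

lemma dim_row_adj_matrix [simp]: "dim_row (adj_matrix n E) = n"
  unfolding adj_matrix_def by simp

lemma adj_matrix_carrier: "adj_matrix n E \<in> carrier_mat n n"
  unfolding adj_matrix_def by simp

lemma adj_matrix_mult_vec_index:
  assumes "i < n" "v \<in> carrier_vec n"
  shows "(adj_matrix n E *\<^sub>v v) $ i = (\<Sum>j\<in>neighbours n E i. v $ j)"
proof -
  have "(adj_matrix n E *\<^sub>v v) $ i = (\<Sum>j\<in>{0..<n}. if E i j then v $ j else 0)"
    using assms unfolding adj_matrix_def by (auto simp: scalar_prod_def intro!: sum.cong)
  also have "\<dots> = (\<Sum>j\<in>neighbours n E i. v $ j)"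
    unfolding neighbours_def by (simp add: sum.inter_filter[symmetric] atLeast0LessThan)
  finally show ?thesis .
qed

lemma le_spec_rad:
  assumes "eigenvalue (adj_matrix n E) x"
  shows "x \<le> spec_rad n E"
proof -
  have "finite {x. eigenvalue (adj_matrix n E) x}"
    using card_finite_spectrum(1)[OF adj_matrix_carrier] unfolding spectrum_def by simp
  then show ?thesis unfolding spec_rad_def using assms by simp
qed

lemma spec_rad_is_eigenvalue:
  assumes "simple_graph n E" and "n > 0"
  shows "eigenvalue (adj_matrix n E) (spec_rad n E)"
proof -
  let ?ev = "{x. eigenvalue (adj_matrix n E) x}"
  have "finite ?ev"
    using card_finite_spectrum(1)[OF adj_matrix_carrier] unfolding spectrum_def by simp
  moreover have "?ev \<noteq> {}"
    using real_symmetric_mat_has_eigenvalue[OF adj_matrix_carrier \<open>n > 0\<close>] assms(1)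
    unfolding adj_matrix_def simple_graph_def by auto
  ultimately show ?thesis unfolding spec_rad_def using Max_in by blast
qed

lemma card_arcs_from_side_eq_num_edges:
  assumes G: "simple_graph n E" and side: "\<And>i j. E i j \<Longrightarrow> i \<in> S \<longleftrightarrow> j \<notin> S"
  shows "card {(i, j). i \<in> S \<and> E i j} = num_edges n E"
proof -
  let ?A = "{(i, j). i \<in> S \<and> E i j}"
  let ?D = "{(i, j). i < j \<and> j < n \<and> E i j}"
  define f where "f = (\<lambda>(i::nat, j::nat). (min i j, max i j))"
  have inj: "inj_on f ?A"
    by (rule inj_on_inverseI[where g = "\<lambda>(i, j). if i \<in> S then (i, j) else (j, i)"])
      (use side in \<open>auto simp: f_def min_def max_def\<close>)
  have img: "f ` ?A = ?D"
  proof
    show "f ` ?A \<subseteq> ?D"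
    proof
      fix p assume "p \<in> f ` ?A"
      then obtain i j where ij: "E i j" "p = (min i j, max i j)" unfolding f_def by auto
      moreover have "i \<noteq> j" "i < n" "j < n" "E j i"
        using G ij(1) unfolding simple_graph_def by metis+
      ultimately show "p \<in> ?D" by (auto simp: min_def max_def)
    qed
    show "?D \<subseteq> f ` ?A"
    proof
      fix p assume "p \<in> ?D"
      then obtain i j where ij: "i < j" "E i j" "p = (i, j)" by auto
      have "E j i" using G ij(2) unfolding simple_graph_def by auto
      show "p \<in> f ` ?A"
      proof (cases "i \<in> S")
        case True
        then have "(i, j) \<in> ?A" "f (i, j) = p" using ij unfolding f_def by simp_all
        then show ?thesis by (metis image_eqI)
      next
        case False
        then have "(j, i) \<in> ?A" "f (j, i) = p"
          using ij side[OF \<open>E i j\<close>] \<open>E j i\<close> unfolding f_def by auto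
        then show ?thesis by (metis image_eqI)
      qed
    qed
  qed
  show ?thesis unfolding num_edges_def img[symmetric] card_image[OF inj] ..
qed

lemma sum_card_neighbours_side_eq_num_edges:
  assumes G: "simple_graph n E" and "finite S" and side: "\<And>i j. E i j \<Longrightarrow> i \<in> S \<longleftrightarrow> j \<notin> S"
  shows "(\<Sum>i\<in>S. card (neighbours n E i)) = num_edges n E"
proof -
  have "Sigma S (neighbours n E) = {(i, j). i \<in> S \<and> E i j}"
    using G unfolding simple_graph_def neighbours_def by auto
  then show ?thesis
    using card_SigmaI[OF \<open>finite S\<close>, of "neighbours n E"]
      card_arcs_from_side_eq_num_edges[OF G side] by simp
qed

lemma eigen_equation_weight_transfer:
  fixes w :: "nat \<Rightarrow> real"
  assumes "finite T" and S_nbrs: "\<And>i. i \<in> S \<Longrightarrow> neighbours n E i \<subseteq> T"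
    and eq: "\<And>i. i \<in> S \<Longrightarrow> x * w i = (\<Sum>j\<in>neighbours n E i. w j)"
  shows "x\<^sup>2 * (\<Sum>i\<in>S. (w i)\<^sup>2) \<le> (\<Sum>i\<in>S. real (card (neighbours n E i))) * (\<Sum>j\<in>T. (w j)\<^sup>2)"
proof -
  have "x\<^sup>2 * (w i)\<^sup>2 \<le> real (card (neighbours n E i)) * (\<Sum>j\<in>T. (w j)\<^sup>2)" if "i \<in> S" for i
  proof -
    have "x\<^sup>2 * (w i)\<^sup>2 = (\<Sum>j\<in>neighbours n E i. w j)\<^sup>2"
      by (simp add: eq[OF that] power_mult_distrib[symmetric])
    also have "\<dots> \<le> real (card (neighbours n E i)) * (\<Sum>j\<in>neighbours n E i. (w j)\<^sup>2)"
      using sum_squared_le_sum_of_squares by (simp add: mult.commute)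
    also have "\<dots> \<le> real (card (neighbours n E i)) * (\<Sum>j\<in>T. (w j)\<^sup>2)"
      by (intro mult_left_mono sum_mono2) (use \<open>finite T\<close> S_nbrs[OF that] in auto)
    finally show ?thesis .
  qed
  then have "(\<Sum>i\<in>S. x\<^sup>2 * (w i)\<^sup>2) \<le> (\<Sum>i\<in>S. real (card (neighbours n E i)) * (\<Sum>j\<in>T. (w j)\<^sup>2))"
    by (rule sum_mono)
  then show ?thesis by (simp only: sum_distrib_left[symmetric] sum_distrib_right[symmetric])
qed

lemma bipartite_eigenvalue_square_le_num_edges:
  assumes G: "simple_graph n E" and "bipartite n E" and ev: "eigenvalue (adj_matrix n E) x"
  shows "x\<^sup>2 \<le> real (num_edges n E)"
proof -
  obtain S where S: "S \<subseteq> {0..<n}" and side: "\<And>i j. E i j \<Longrightarrow> i \<in> S \<longleftrightarrow> j \<notin> S"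
    using \<open>bipartite n E\<close> unfolding bipartite_def by blast
  define T where "T = {0..<n} - S"
  have side': "E i j \<Longrightarrow> i \<in> T \<longleftrightarrow> j \<notin> T" for i j
    using side G unfolding T_def simple_graph_def by auto
  have "finite S" "finite T" using S finite_subset unfolding T_def by auto
  obtain v where v: "v \<in> carrier_vec n" "v \<noteq> 0\<^sub>v n" "adj_matrix n E *\<^sub>v v = x \<cdot>\<^sub>v v"
    using ev adj_matrix_carrier[of n E] unfolding eigenvalue_def eigenvector_def by auto
  define w where "w i = v $ i" for i
  define m where "m = real (num_edges n E)"
  have eq: "x * w i = (\<Sum>j\<in>neighbours n E i. w j)" if "i < n" for i
    using adj_matrix_mult_vec_index[OF that v(1), of E] v(1,3) that unfolding w_def by simp
  have nbrs: "neighbours n E i \<subseteq> T" if "i \<in> S" for i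
    using side that unfolding neighbours_def T_def by auto
  have nbrs': "neighbours n E i \<subseteq> S" if "i \<in> T" for i
    using side' that unfolding neighbours_def T_def by auto
  have deg: "(\<Sum>i\<in>U. real (card (neighbours n E i))) = m"
    if "finite U" "\<And>i j. E i j \<Longrightarrow> i \<in> U \<longleftrightarrow> j \<notin> U" for U
    using sum_card_neighbours_side_eq_num_edges[OF G that] unfolding m_def by (metis of_nat_sum)
  have "x\<^sup>2 * (\<Sum>i\<in>S. (w i)\<^sup>2) \<le> (\<Sum>i\<in>S. real (card (neighbours n E i))) * (\<Sum>i\<in>T. (w i)\<^sup>2)"
    by (rule eigen_equation_weight_transfer) (use \<open>finite T\<close> nbrs eq S in auto)
  moreover have "x\<^sup>2 * (\<Sum>i\<in>T. (w i)\<^sup>2) \<le> (\<Sum>i\<in>T. real (card (neighbours n E i))) * (\<Sum>i\<in>S. (w i)\<^sup>2)"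
    by (rule eigen_equation_weight_transfer) (use \<open>finite S\<close> nbrs' eq in \<open>auto simp: T_def\<close>)
  ultimately have "x\<^sup>2 * ((\<Sum>i\<in>S. (w i)\<^sup>2) + (\<Sum>i\<in>T. (w i)\<^sup>2))
      \<le> m * ((\<Sum>i\<in>S. (w i)\<^sup>2) + (\<Sum>i\<in>T. (w i)\<^sup>2))"
    by (simp add: deg[OF \<open>finite S\<close> side] deg[OF \<open>finite T\<close> side'] distrib_left)
  moreover have "(\<Sum>i\<in>S. (w i)\<^sup>2) + (\<Sum>i\<in>T. (w i)\<^sup>2) = (\<Sum>i<n. (w i)\<^sup>2)"
  proof -
    have "S \<union> T = {..<n}" "S \<inter> T = {}" using S unfolding T_def by auto
    then show ?thesis using \<open>finite S\<close> \<open>finite T\<close> by (metis sum.union_disjoint)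
  qed
  moreover obtain i where "i < n" "v $ i \<noteq> 0"
    using v(1,2) by (metis eq_vecI carrier_vecD index_zero_vec)
  then have "(\<Sum>i<n. (w i)\<^sup>2) > 0"
    unfolding w_def by (intro sum_pos2[of _ i]) auto
  ultimately show ?thesis unfolding m_def by simp
qed

lemma bipartite_spec_rad_le_sqrt_num_edges:
  assumes "simple_graph n E" and "bipartite n E" and "n > 0"
  shows "spec_rad n E \<le> sqrt (real (num_edges n E))"
  using bipartite_eigenvalue_square_le_num_edges[OF assms(1,2) spec_rad_is_eigenvalue[OF assms(1,3)]]
  by (rule real_le_rsqrt)

lemma num_edges_complete_bipartite:
  "num_edges (a + b) (complete_bipartite a b) = a * b"
proof -
  have "{(i, j). i < j \<and> j < a + b \<and> complete_bipartite a b i j} = {0..<a} \<times> {a..<a + b}"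
    unfolding complete_bipartite_def by auto
  then show ?thesis unfolding num_edges_def by simp
qed

lemma neighbours_complete_bipartite:
  assumes "i < a + b"
  shows "neighbours (a + b) (complete_bipartite a b) i = (if i < a then {a..<a + b} else {0..<a})"
  using assms unfolding neighbours_def complete_bipartite_def by auto

lemma eigenvalue_complete_bipartite:
  assumes "b > 0"
  shows "eigenvalue (adj_matrix (a + b) (complete_bipartite a b)) (sqrt (real a * real b))"
proof -
  \<comment> \<open>for a = 0 the matrix is zero and sqrt a would make v vanish, so use 1 there\<close>
  define v :: "real vec" where
    "v = vec (a + b) (\<lambda>i. if i < a then sqrt b else if a = 0 then 1 else sqrt a)"
  have v: "v \<in> carrier_vec (a + b)" unfolding v_def by simp
  have "v $ a \<noteq> 0" using assms unfolding v_def by simp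
  then have "v \<noteq> 0\<^sub>v (a + b)" using assms by auto
  moreover have "adj_matrix (a + b) (complete_bipartite a b) *\<^sub>v v = sqrt (real a * real b) \<cdot>\<^sub>v v"
  proof (rule eq_vecI)
    fix i assume "i < dim_vec (sqrt (real a * real b) \<cdot>\<^sub>v v)"
    then have i: "i < a + b" using v by simp
    have smult: "(c \<cdot>\<^sub>v v) $ i = c * v $ i" for c
      using i v by simp
    have first: "v $ j = sqrt b" if "j < a" for j using that unfolding v_def by simp
    have second: "v $ j = (if a = 0 then 1 else sqrt a)" if "j \<in> {a..<a + b}" for j
      using that unfolding v_def by simp
    show "(adj_matrix (a + b) (complete_bipartite a b) *\<^sub>v v) $ i = (sqrt (real a * real b) \<cdot>\<^sub>v v) $ i"
    proof (cases "i < a")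
      case True
      then have "(\<Sum>j\<in>{a..<a + b}. v $ j) = real b * sqrt a"
        using second by simp
      then show ?thesis
        using i True first
        by (simp add: smult adj_matrix_mult_vec_index[OF i v] neighbours_complete_bipartite[OF i] real_sqrt_mult)
    next
      case False
      then have "(\<Sum>j\<in>{0..<a}. v $ j) = real a * sqrt b"
        using first by simp
      then show ?thesis
        using i False second[of i]
        by (simp add: smult adj_matrix_mult_vec_index[OF i v] neighbours_complete_bipartite[OF i] real_sqrt_mult)
    qed
  qed (use v adj_matrix_carrier in auto)
  ultimately show ?thesis
    using v adj_matrix_carrier unfolding eigenvalue_def eigenvector_def by auto
qed

theorem proposition5:
  fixes k n :: nat and E :: "nat \<Rightarrow> nat \<Rightarrow> bool"
  assumes "1 \<le> k" and "k \<le> n"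
    and "simple_graph n E" and "bipartite n E"
    and "num_edges n E \<le> num_edges n (complete_bipartite (k - 1) (n - k + 1))"
  shows "spec_rad n E \<le> spec_rad n (complete_bipartite (k - 1) (n - k + 1))"
proof -
  define a where "a = k - 1"
  define b where "b = n - k + 1"
  have n: "n = a + b" and "b > 0" using assms(1,2) unfolding a_def b_def by auto
  have K: "complete_bipartite (k - 1) (n - k + 1) = complete_bipartite a b"
    unfolding a_def b_def ..
  have "num_edges n E \<le> a * b"
    using assms(5)[unfolded K] num_edges_complete_bipartite[of a b] n by simp
  have "spec_rad n E \<le> sqrt (real (num_edges n E))"
    using bipartite_spec_rad_le_sqrt_num_edges[OF assms(3,4)] n \<open>b > 0\<close> by simp
  also have "\<dots> \<le> sqrt (real a * real b)"
    using \<open>num_edges n E \<le> a * b\<close> by (simp flip: of_nat_mult)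
  also have "\<dots> \<le> spec_rad n (complete_bipartite a b)"
    by (rule le_spec_rad) (use eigenvalue_complete_bipartite[OF \<open>b > 0\<close>] n in simp)
  finally show ?thesis unfolding K .
qed

end
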